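(* Let $X$ be a Hausdorff space which admits a continuous map $f:X\to X$ without fixed points. Then there exist $m,l\in X$ such that the man has a strategy in $X$ for the starting points $m$ (man) and $l$ (lion).
   Context: For a topological space $X$ and $x\in X$, let $P_x(X)$ be the set of continuous maps $\gamma:[0,+\infty)\to X$ with $\gamma(0)=x$. For $\gamma\in P_x(X)$ and $t\ge 0$, write $\gamma_{<t}=\gamma|_{[0,t)}$ and $\gamma_{\le t}=\gamma|_{[0,t]}$. Given starting points $m$ (man) and $l$ (lion) in $X$, a strategy for the man is a function $S:P_l(X)\to P_m(X)$ such that (i) for each $\beta\in P_l(X)$ and each $t\ge 0$, $S(\beta)(t)\neq\beta(t)$; and (ii) (no-lookahead rule) whenever $\beta,\beta'\in P_l(X)$ and $t\ge0$ satisfy $\beta_{<t}=\beta'_{<t}$, then $S(\beta)_{\le t}=S(\beta')_{\le t}$. *)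

theory Defs
  imports "HOL-Analysis.Analysis"
begin

text \<open>Paths in the ambient space (the type 'a) starting at x, parametrised by [0,+\<infinity>).
  Values at negative times are irrelevant (never inspected).\<close>
definition paths_from :: "'a::topological_space \<Rightarrow> (real \<Rightarrow> 'a) set" where
  "paths_from x = {\<gamma>. continuous_on {0..} \<gamma> \<and> \<gamma> 0 = x}"

definition man_strategy ::
  "'a::topological_space \<Rightarrow> 'a \<Rightarrow> ((real \<Rightarrow> 'a) \<Rightarrow> (real \<Rightarrow> 'a)) \<Rightarrow> bool" where
  "man_strategy m l S \<longleftrightarrow>
     (\<forall>\<beta>\<in>paths_from l. S \<beta> \<in> paths_from m) \<and>
     (\<forall>\<beta>\<in>paths_from l. \<forall>t\<ge>0. S \<beta> t \<noteq> \<beta> t) \<and>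
     (\<forall>\<beta>\<in>paths_from l. \<forall>\<beta>'\<in>paths_from l. \<forall>t\<ge>0.
        (\<forall>s\<in>{0..<t}. \<beta> s = \<beta>' s) \<longrightarrow> (\<forall>s\<in>{0..t}. S \<beta> s = S \<beta>' s))"

definition man_has_strategy :: "'a::topological_space \<Rightarrow> 'a \<Rightarrow> bool" where
  "man_has_strategy m l \<longleftrightarrow> (\<exists>S. man_strategy m l S)"

end

theory Submission
  imports Defs
begin

text \<open>The man simply stays at f of the lion's position: f has no fixed points, and f \<circ> \<beta> is
  determined at time t by \<beta> on [0,t), because in a Hausdorff space a continuous path is
  determined at t by its values on [0,t) (uniqueness of limits).\<close>

lemma continuous_paths_agree_at_endpoint:
  fixes \<beta> \<beta>' :: "real \<Rightarrow> 'a::t2_space"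
  assumes "continuous_on {0..} \<beta>" and "continuous_on {0..} \<beta>'"
    and "\<beta> 0 = \<beta>' 0" and "t \<ge> 0" and agree: "\<forall>s\<in>{0..<t}. \<beta> s = \<beta>' s"
  shows "\<beta> t = \<beta>' t"
proof (cases "t = 0")
  case True
  then show ?thesis using assms(3) by simp
next
  case False
  with \<open>t \<ge> 0\<close> have nontrivial: "at t within {0..<t} \<noteq> bot"
    by (simp add: trivial_limit_within)
  have "(\<beta> \<longlongrightarrow> \<beta> t) (at t within {0..<t})" "(\<beta>' \<longlongrightarrow> \<beta>' t) (at t within {0..<t})"
    using assms(1,2,4) unfolding continuous_on_def
    by (auto intro: tendsto_within_subset)
  moreover have "\<forall>\<^sub>F s in at t within {0..<t}. \<beta>' s = \<beta> s"
    using agree by (simp add: eventually_at_filter)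
  ultimately have "(\<beta> \<longlongrightarrow> \<beta>' t) (at t within {0..<t})"
    using tendsto_cong by fastforce
  with \<open>(\<beta> \<longlongrightarrow> \<beta> t) (at t within {0..<t})\<close> show ?thesis
    using tendsto_unique[OF nontrivial] by blast
qed

lemma man_strategy_comp_fixpoint_free:
  fixes f :: "'a::t2_space \<Rightarrow> 'a"
  assumes contf: "continuous_on UNIV f" and no_fix: "\<forall>x. f x \<noteq> x"
  shows "man_strategy (f l) l (\<lambda>\<beta>. f \<circ> \<beta>)"
  unfolding man_strategy_def
proof (intro conjI ballI allI impI)
  fix \<beta> assume "\<beta> \<in> paths_from l"
  then have "continuous_on {0..} \<beta>" "\<beta> 0 = l"
    unfolding paths_from_def by auto
  moreover have "continuous_on {0..} (f \<circ> \<beta>)"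
    using continuous_on_compose[OF calculation(1) continuous_on_subset[OF contf]] by simp
  ultimately show "f \<circ> \<beta> \<in> paths_from (f l)"
    unfolding paths_from_def by simp
next
  fix \<beta> and t :: real
  show "(f \<circ> \<beta>) t \<noteq> \<beta> t" using no_fix by simp
next
  fix \<beta> \<beta>' and t s :: real
  assume paths: "\<beta> \<in> paths_from l" "\<beta>' \<in> paths_from l" and "t \<ge> 0"
    and agree: "\<forall>s\<in>{0..<t}. \<beta> s = \<beta>' s" and "s \<in> {0..t}"
  have "\<beta> t = \<beta>' t"
    using continuous_paths_agree_at_endpoint[OF _ _ _ \<open>t \<ge> 0\<close> agree] paths
    unfolding paths_from_def by simp
  with agree \<open>s \<in> {0..t}\<close> show "(f \<circ> \<beta>) s = (f \<circ> \<beta>') s"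
    by (cases "s = t") auto
qed

theorem mainTheorem2:
  fixes f :: "'a::t2_space \<Rightarrow> 'a"
  assumes "continuous_on UNIV f"
    and "\<forall>x. f x \<noteq> x"
  shows "\<exists>m l :: 'a. man_has_strategy m l"
  using man_strategy_comp_fixpoint_free[OF assms] unfolding man_has_strategy_def by blast

end
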